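(* Consider the reaction–diffusion system on $\Omega=[0,\pi]$ with homogeneous Neumann boundary conditions, $$\partial_t f=d_1\Delta f+r\alpha f m(1-f-m)-(1+h)f,\qquad \partial_t m=d_2\Delta m+(1-r)\alpha f m(1-f-m)+(s-1)m,$$ with $0<r<1$, $\alpha>0$, $h\ge0$, $0\le s<1$, $d_1,d_2>0$. At every positive spatially homogeneous steady state $(f^*,m^* )$, the Jacobian $J=(J_{ij})$ of the reaction terms satisfies $J_{11}<0$ and $J_{22}<0$. Consequently, for no choice of $d_1,d_2>0$ do the Turing instability conditions $$J_{11}+J_{22}<0,\quad J_{11}J_{22}-J_{12}J_{21}>0,\quad d_2J_{11}+d_1J_{22}>0,\quad (d_2J_{11}+d_1J_{22})^2-4d_1d_2(J_{11}J_{22}-J_{12}J_{21})>0$$ hold, i.e. the system exhibits no Turing (diffusion-driven) instability.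
   Context: Spatially explicit FHMS mating model without Allee effect; $f,m$ are scaled female/male densities, $r$ primary sex ratio, $h$ scaled harvesting rate, $s$ scaled stocking rate, $d_1,d_2$ diffusion coefficients. *)

theory Defs
  imports "HOL-Analysis.Analysis"
begin

definition reactF :: "real \<Rightarrow> real \<Rightarrow> real \<Rightarrow> real \<Rightarrow> real \<Rightarrow> real" where
  "reactF r \<alpha> h f m = r * \<alpha> * f * m * (1 - f - m) - (1 + h) * f"

definition reactG :: "real \<Rightarrow> real \<Rightarrow> real \<Rightarrow> real \<Rightarrow> real \<Rightarrow> real" where
  "reactG r \<alpha> s f m = (1 - r) * \<alpha> * f * m * (1 - f - m) + (s - 1) * m"

definition pos_steady_state :: "real \<Rightarrow> real \<Rightarrow> real \<Rightarrow> real \<Rightarrow> real \<Rightarrow> real \<Rightarrow> bool" where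
  "pos_steady_state r \<alpha> h s f m \<longleftrightarrow>
     f > 0 \<and> m > 0 \<and> reactF r \<alpha> h f m = 0 \<and> reactG r \<alpha> s f m = 0"

definition J11 where "J11 r \<alpha> h s f m = deriv (\<lambda>x. reactF r \<alpha> h x m) f"
definition J12 where "J12 r \<alpha> h s f m = deriv (\<lambda>y. reactF r \<alpha> h f y) m"
definition J21 where "J21 r \<alpha> h s f m = deriv (\<lambda>x. reactG r \<alpha> s x m) f"
definition J22 where "J22 r \<alpha> h s f m = deriv (\<lambda>y. reactG r \<alpha> s f y) m"

definition turing_conditions :: "real \<Rightarrow> real \<Rightarrow> real \<Rightarrow> real \<Rightarrow> real \<Rightarrow> real \<Rightarrow> bool" where
  "turing_conditions d1 d2 a11 a12 a21 a22 \<longleftrightarrow>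
     a11 + a22 < 0 \<and> a11 * a22 - a12 * a21 > 0 \<and> d2 * a11 + d1 * a22 > 0 \<and>
     (d2 * a11 + d1 * a22)^2 - 4 * d1 * d2 * (a11 * a22 - a12 * a21) > 0"

end

theory Submission
  imports Defs
begin

text \<open>At a positive steady state the equilibrium equations cancel every term of the diagonal
  Jacobian entries except the one coming from the quadratic mating loss, so
  \<open>J11 = -r\<alpha>fm\<close> and \<open>J22 = -(1-r)\<alpha>fm\<close> are both negative. With two self-inhibiting species
  \<open>d2 J11 + d1 J22 < 0\<close> for all positive diffusion rates, which violates the third Turing
  condition. Neither the harvesting nor the stocking rate plays any role.\<close>

lemma not_turing_conditions_if_diagonal_neg:
  fixes d1 d2 a11 a12 a21 a22 :: real
  assumes "d1 > 0" "d2 > 0" "a11 < 0" "a22 < 0"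
  shows "\<not> turing_conditions d1 d2 a11 a12 a21 a22"
proof -
  have "d2 * a11 + d1 * a22 < 0"
    using assms by (simp add: add_neg_neg mult_pos_neg)
  then show ?thesis
    unfolding turing_conditions_def by linarith
qed

lemma J11_eq: "J11 r \<alpha> h s f m = r*\<alpha>*m*(1-f-m) - r*\<alpha>*f*m - (1+h)"
proof -
  have "((\<lambda>x. reactF r \<alpha> h x m) has_field_derivative (r*\<alpha>*m*(1-f-m) - r*\<alpha>*f*m - (1+h))) (at f)"
    unfolding reactF_def
    by (rule derivative_eq_intros refl | simp add: algebra_simps)+
  then show ?thesis
    unfolding J11_def by (rule DERIV_imp_deriv)
qed

lemma J22_eq: "J22 r \<alpha> h s f m = (1-r)*\<alpha>*f*(1-f-m) - (1-r)*\<alpha>*f*m + (s-1)"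
proof -
  have "((\<lambda>y. reactG r \<alpha> s f y) has_field_derivative ((1-r)*\<alpha>*f*(1-f-m) - (1-r)*\<alpha>*f*m + (s-1))) (at m)"
    unfolding reactG_def
    by (rule derivative_eq_intros refl | simp add: algebra_simps)+
  then show ?thesis
    unfolding J22_def by (rule DERIV_imp_deriv)
qed

lemma pos_steady_state_female_eq:
  assumes "pos_steady_state r \<alpha> h s f m"
  shows "r*\<alpha>*m*(1-f-m) = 1+h"
proof -
  have "f * (r*\<alpha>*m*(1-f-m) - (1+h)) = reactF r \<alpha> h f m"
    unfolding reactF_def by algebra
  with assms have "f > 0" and "f * (r*\<alpha>*m*(1-f-m) - (1+h)) = 0"
    unfolding pos_steady_state_def by auto
  then show ?thesis by simp
qed

lemma pos_steady_state_male_eq: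
  assumes "pos_steady_state r \<alpha> h s f m"
  shows "(1-r)*\<alpha>*f*(1-f-m) = 1-s"
proof -
  have "m * ((1-r)*\<alpha>*f*(1-f-m) - (1-s)) = reactG r \<alpha> s f m"
    unfolding reactG_def by algebra
  with assms have "m > 0" and "m * ((1-r)*\<alpha>*f*(1-f-m) - (1-s)) = 0"
    unfolding pos_steady_state_def by auto
  then show ?thesis by simp
qed

lemma J11_at_pos_steady_state:
  assumes "pos_steady_state r \<alpha> h s f m"
  shows "J11 r \<alpha> h s f m = - (r*\<alpha>*f*m)"
  using pos_steady_state_female_eq[OF assms] by (simp add: J11_eq)

lemma J22_at_pos_steady_state:
  assumes "pos_steady_state r \<alpha> h s f m"
  shows "J22 r \<alpha> h s f m = - ((1-r)*\<alpha>*f*m)"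
  using pos_steady_state_male_eq[OF assms] by (simp add: J22_eq)

theorem mainTheorem10:
  fixes r \<alpha> h s f m :: real
  assumes "0 < r" "r < 1" "\<alpha> > 0" "h \<ge> 0" "0 \<le> s" "s < 1"
    and "pos_steady_state r \<alpha> h s f m"
  shows "J11 r \<alpha> h s f m < 0 \<and> J22 r \<alpha> h s f m < 0 \<and>
    (\<forall>d1 d2 :: real. d1 > 0 \<longrightarrow> d2 > 0 \<longrightarrow>
       \<not> turing_conditions d1 d2 (J11 r \<alpha> h s f m) (J12 r \<alpha> h s f m)
                                  (J21 r \<alpha> h s f m) (J22 r \<alpha> h s f m))"
proof -
  have "f > 0" "m > 0"
    using assms(7) unfolding pos_steady_state_def by auto
  then have J11_neg: "J11 r \<alpha> h s f m < 0" and J22_neg: "J22 r \<alpha> h s f m < 0"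
    using assms(1-3) J11_at_pos_steady_state[OF assms(7)] J22_at_pos_steady_state[OF assms(7)]
    by simp_all
  then show ?thesis
    by (simp add: not_turing_conditions_if_diagonal_neg)
qed

end
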